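(* Let $A\subseteq\mathbb{R}$ be an open invex set with respect to $\eta:A\times A\to\mathbb{R}$ and let $a,b\in A$ with $a<a+\eta(b,a)$. Let $f:A\to\mathbb{R}$ be differentiable with $f'\in L[a,a+\eta(b,a)]$, and suppose $|f'|^q$ is preinvex on $A$ for some fixed $q>1$. Let $p$ satisfy $\frac1p+\frac1q=1$ and let $\alpha\in[0,1]$. Then \[ \left|\frac{f(a)+f(a+\eta(b,a))}{2}-\frac{\Gamma(\alpha+1)}{2\eta^{\alpha}(b,a)}\Big[J_{a^+}^{\alpha}f\big(a+\eta(b,a)\big)+J_{(a+\eta(b,a))^-}^{\alpha}f(a)\Big]\right|\le\frac{\eta(b,a)}{2(\alpha p+1)^{1/p}}\left(\frac{|f'(a)|^q+|f'(b)|^q}{2}\right)^{1/q}. \]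
   Context: A set $A\subseteq\mathbb{R}$ is invex with respect to $\eta:A\times A\to\mathbb{R}$ if $x+t\eta(y,x)\in A$ for all $x,y\in A$ and $t\in[0,1]$. A function $g$ on an invex set $A$ is preinvex with respect to $\eta$ if $g(x+t\eta(y,x))\le(1-t)g(x)+tg(y)$ for all $x,y\in A$, $t\in[0,1]$. For $g\in L[c,d]$ and $\alpha>0$, the Riemann–Liouville fractional integrals are $J_{c^+}^{\alpha}g(x)=\frac{1}{\Gamma(\alpha)}\int_c^x(x-t)^{\alpha-1}g(t)\,dt$ for $x>c$ and $J_{d^-}^{\alpha}g(x)=\frac{1}{\Gamma(\alpha)}\int_x^d(t-x)^{\alpha-1}g(t)\,dt$ for $x<d$, with the convention $J_{c^+}^{0}g=J_{d^-}^{0}g=g$; $\eta^{\alpha}(b,a)=(\eta(b,a))^{\alpha}$. *)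

theory Defs
  imports "HOL-Analysis.Analysis"
begin

definition invex :: "real set \<Rightarrow> (real \<Rightarrow> real \<Rightarrow> real) \<Rightarrow> bool" where
  "invex A \<eta> \<longleftrightarrow> (\<forall>x\<in>A. \<forall>y\<in>A. \<forall>t\<in>{0..1}. x + t * \<eta> y x \<in> A)"

definition preinvex :: "real set \<Rightarrow> (real \<Rightarrow> real \<Rightarrow> real) \<Rightarrow> (real \<Rightarrow> real) \<Rightarrow> bool" where
  "preinvex A \<eta> g \<longleftrightarrow> invex A \<eta> \<and>
     (\<forall>x\<in>A. \<forall>y\<in>A. \<forall>t\<in>{0..1}. g (x + t * \<eta> y x) \<le> (1 - t) * g x + t * g y)"

definition RL_left :: "real \<Rightarrow> real \<Rightarrow> (real \<Rightarrow> real) \<Rightarrow> real \<Rightarrow> real" where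
  "RL_left \<alpha> c g x = (if \<alpha> = 0 then g x
     else (1 / Gamma \<alpha>) * (LINT t:{c..x}|lborel. (x - t) powr (\<alpha> - 1) * g t))"

definition RL_right :: "real \<Rightarrow> real \<Rightarrow> (real \<Rightarrow> real) \<Rightarrow> real \<Rightarrow> real" where
  "RL_right \<alpha> d g x = (if \<alpha> = 0 then g x
     else (1 / Gamma \<alpha>) * (LINT t:{x..d}|lborel. (t - x) powr (\<alpha> - 1) * g t))"

end

theory Submission
  imports Defs
begin

(* Integration by parts against W x = ((x - a) powr alpha - (c - x) powr alpha) / alpha, whose
   derivative is the sum of the two Riemann-Liouville kernels, gives, with c = a + eta b a,
     Gamma (alpha + 1) (J_{a+} f (c) + J_{c-} f (a))
       = (c - a) powr alpha (f a + f c) + integral over [a, c] of ((c - x) powr alpha - (x - a) powr alpha) f' x.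
   Subadditivity of t powr alpha bounds the weight by |a + c - 2 x| powr alpha, and Hoelder's inequality
   together with the preinvexity bound |f' (a + t eta b a)| powr q <= (1 - t) |f' a| powr q + t |f' b| powr q
   estimates the remaining integral. *)

lemma conjugate_exponent_gt_one:
  fixes p q :: real
  assumes "q > 1" "1 / p + 1 / q = 1"
  shows "p > 1"
proof -
  have "0 < 1 / q" "1 / q < 1" using assms(1) by auto
  then have "0 < 1 / p" "1 / p < 1" using assms(2) by linarith+
  then show ?thesis by (simp add: divide_less_eq zero_less_divide_iff)
qed

lemma powr_add_le_add_powr:
  fixes x y \<alpha> :: real
  assumes "0 \<le> x" "0 \<le> y" "0 < \<alpha>" "\<alpha> \<le> 1"
  shows "(x + y) powr \<alpha> \<le> x powr \<alpha> + y powr \<alpha>"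
proof (cases "x + y = 0")
  case True
  then show ?thesis using assms by simp
next
  case False
  define s where "s = x + y"
  have s: "0 < s" using False assms unfolding s_def by linarith
  have "x / s \<le> (x / s) powr \<alpha>" "y / s \<le> (y / s) powr \<alpha>"
    using powr_mono'[of \<alpha> 1 "x / s"] powr_mono'[of \<alpha> 1 "y / s"] assms s
    by (auto simp: s_def divide_le_eq)
  then have "x / s + y / s \<le> (x powr \<alpha> + y powr \<alpha>) / s powr \<alpha>"
    using assms s by (simp add: powr_divide add_divide_distrib)
  moreover have "x / s + y / s = 1" using s by (simp add: s_def add_divide_distrib[symmetric])
  ultimately show ?thesis using s by (simp add: s_def field_simps)
qed

lemma abs_powr_diff_le:
  fixes u v \<alpha> :: real
  assumes "0 \<le> u" "0 \<le> v" "0 < \<alpha>" "\<alpha> \<le> 1"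
  shows "\<bar>u powr \<alpha> - v powr \<alpha>\<bar> \<le> \<bar>u - v\<bar> powr \<alpha>"
proof -
  have *: "\<bar>u powr \<alpha> - v powr \<alpha>\<bar> \<le> \<bar>u - v\<bar> powr \<alpha>" if "0 \<le> v" "v \<le> u" for u v :: real
  proof -
    have "u powr \<alpha> \<le> (u - v) powr \<alpha> + v powr \<alpha>"
      using powr_add_le_add_powr[of "u - v" v \<alpha>] that assms(3,4) by simp
    moreover have "v powr \<alpha> \<le> u powr \<alpha>" using that assms(3) by (simp add: powr_mono2)
    ultimately show ?thesis using that by simp
  qed
  show ?thesis using *[of v u] *[of u v] assms by (cases "v \<le> u") (auto simp: abs_minus_commute)
qed

(* Hoelder's inequality via Young's inequality for u / U powr (1/p) and v / V powr (1/q); bounding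
   u powr p and v powr q by integrable majorants h and k avoids having to integrate those powers. *)
lemma integral_mult_le_Holder_majorants:
  fixes u v h k :: "real \<Rightarrow> real" and p q U V :: real
  assumes pq: "p > 1" "q > 1" "1 / p + 1 / q = 1" and UV: "U > 0" "V > 0"
    and nonneg: "\<And>x. x \<in> S \<Longrightarrow> 0 \<le> u x" "\<And>x. x \<in> S \<Longrightarrow> 0 \<le> v x"
    and h: "\<And>x. x \<in> S \<Longrightarrow> u x powr p \<le> h x" and k: "\<And>x. x \<in> S \<Longrightarrow> v x powr q \<le> k x"
    and int: "(\<lambda>x. u x * v x) integrable_on S" "h integrable_on S" "k integrable_on S"
    and U: "integral S h \<le> U" and V: "integral S k \<le> V"
  shows "integral S (\<lambda>x. u x * v x) \<le> U powr (1 / p) * V powr (1 / q)"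
proof -
  define K where "K = U powr (1 / p) * V powr (1 / q)"
  have K: "K > 0" using UV by (simp add: K_def)
  have young: "u x * v x \<le> K * (h x / (p * U) + k x / (q * V))" if x: "x \<in> S" for x
  proof -
    have "(u x / U powr (1 / p)) * (v x / V powr (1 / q))
        \<le> (u x / U powr (1 / p)) powr p / p + (v x / V powr (1 / q)) powr q / q"
      using nonneg[OF x] UV by (intro Youngs_inequality[OF pq]) auto
    also have "\<dots> = u x powr p / (U * p) + v x powr q / (V * q)"
      using nonneg[OF x] UV pq by (simp add: powr_divide powr_powr)
    also have "\<dots> \<le> h x / (p * U) + k x / (q * V)"
      unfolding mult.commute[of U] mult.commute[of V]
      using h[OF x] k[OF x] UV pq by (intro add_mono divide_right_mono) auto
    finally have "(u x / U powr (1 / p)) * (v x / V powr (1 / q)) \<le> h x / (p * U) + k x / (q * V)" .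
    then show ?thesis
      using K UV by (simp add: K_def field_simps)
  qed
  have "integral S (\<lambda>x. u x * v x) \<le> integral S (\<lambda>x. K * (h x / (p * U) + k x / (q * V)))"
    using young int by (intro integral_le integrable_on_mult_right integrable_add integrable_on_divide) auto
  also have "\<dots> = K * (integral S h / (p * U) + integral S k / (q * V))"
    using int by (simp add: integral_add integrable_on_divide)
  also have "\<dots> \<le> K * (1 / p + 1 / q)"
    using U V UV pq K by (intro mult_left_mono add_mono) (auto simp: field_simps)
  finally show ?thesis using pq by (simp add: K_def)
qed

lemma has_integral_powr_shifted:
  fixes a c \<beta> :: real
  assumes "0 < \<beta>" "a \<le> c"
  shows "((\<lambda>x. (x - a) powr (\<beta> - 1)) has_integral (c - a) powr \<beta> / \<beta>) {a..c}"
  using has_integral_shift_real_ivl[OF has_integral_powr_from_0[of "\<beta> - 1" "c - a"], of "- a"] assms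
  by simp

lemma has_integral_powr_reflected:
  fixes a c \<beta> :: real
  assumes "0 < \<beta>" "a \<le> c"
  shows "((\<lambda>x. (c - x) powr (\<beta> - 1)) has_integral (c - a) powr \<beta> / \<beta>) {a..c}"
  using has_integral_powr_shifted[of \<beta> "- c" "- a"] assms
    has_integral_reflect_real[where f="\<lambda>x. (x - - c) powr (\<beta> - 1)" and a="- c" and b="- a"]
  by simp

lemma has_integral_abs_powr_midpoint:
  fixes a c \<gamma> :: real
  assumes "0 < \<gamma>" "a \<le> c"
  shows "((\<lambda>x. \<bar>a + c - 2 * x\<bar> powr \<gamma>) has_integral (c - a) powr (\<gamma> + 1) / (\<gamma> + 1)) {a..c}"
proof -
  define m where "m = (a + c) / 2"
  define I where "I = (c - a) powr (\<gamma> + 1) / (\<gamma> + 1) / 2"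
  have m: "a \<le> m" "m \<le> c" using assms by (simp_all add: m_def)
  have abs_left: "\<bar>a + c - 2 * x\<bar> powr \<gamma> = 2 powr \<gamma> * (m - x) powr \<gamma>" if "x \<le> m" for x
  proof -
    have "\<bar>a + c - 2 * x\<bar> = 2 * (m - x)" using that by (simp add: m_def)
    then show ?thesis using that by (metis powr_mult)
  qed
  have abs_right: "\<bar>a + c - 2 * x\<bar> powr \<gamma> = 2 powr \<gamma> * (x - m) powr \<gamma>" if "m \<le> x" for x
  proof -
    have "\<bar>a + c - 2 * x\<bar> = 2 * (x - m)" using that by (simp add: m_def field_simps)
    then show ?thesis using that by (metis powr_mult)
  qed
  have half: "2 powr \<gamma> * (((c - a) / 2) powr (\<gamma> + 1) / (\<gamma> + 1)) = I"
    using assms by (simp add: I_def powr_divide powr_add)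
  have "((\<lambda>x. 2 powr \<gamma> * (m - x) powr (\<gamma> + 1 - 1)) has_integral I) {a..m}"
    using has_integral_mult_right[OF has_integral_powr_reflected[of "\<gamma> + 1" a m]] assms m
    unfolding half[symmetric] by (simp add: m_def field_simps)
  then have left: "((\<lambda>x. \<bar>a + c - 2 * x\<bar> powr \<gamma>) has_integral I) {a..m}"
    by (rule has_integral_eq[rotated]) (simp add: abs_left)
  have "((\<lambda>x. 2 powr \<gamma> * (x - m) powr (\<gamma> + 1 - 1)) has_integral I) {m..c}"
    using has_integral_mult_right[OF has_integral_powr_shifted[of "\<gamma> + 1" m c]] assms m
    unfolding half[symmetric] by (simp add: m_def field_simps)
  then have right: "((\<lambda>x. \<bar>a + c - 2 * x\<bar> powr \<gamma>) has_integral I) {m..c}"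
    by (rule has_integral_eq[rotated]) (simp add: abs_right)
  show ?thesis
    using has_integral_combine[OF m left right] by (simp only: I_def field_sum_of_halves)
qed

lemma has_integral_linear_interpolation:
  fixes a c A B :: real
  assumes "a < c"
  shows "((\<lambda>x. (1 - (x - a) / (c - a)) * A + (x - a) / (c - a) * B) has_integral (c - a) * ((A + B) / 2)) {a..c}"
proof -
  define d where "d = c - a"
  have d: "0 < d" using assms by (simp add: d_def)
  define F where "F x = A * x + (B - A) * (x - a)^2 / (2 * d)" for x
  have "((\<lambda>x. (1 - (x - a) / d) * A + (x - a) / d * B) has_integral F c - F a) {a..c}"
  proof (rule fundamental_theorem_of_calculus_interior)
    show "continuous_on {a..c} F" unfolding F_def by (intro continuous_intros) (use d in auto)
    fix x assume "x \<in> {a<..<c}"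
    show "(F has_vector_derivative (1 - (x - a) / d) * A + (x - a) / d * B) (at x)"
      unfolding F_def has_real_derivative_iff_has_vector_derivative[symmetric] using d
      by (auto intro!: derivative_eq_intros simp: field_simps)
  qed (use assms in auto)
  moreover have "F c - F a = d * ((A + B) / 2)"
    using d by (simp add: F_def d_def power2_eq_square field_simps)
  ultimately show ?thesis by (simp add: d_def)
qed

lemma absolutely_integrable_continuous_mult:
  fixes f g :: "real \<Rightarrow> real"
  assumes "continuous_on {a..c} f" "g absolutely_integrable_on {a..c}"
  shows "(\<lambda>x. f x * g x) absolutely_integrable_on {a..c}"
proof (rule absolutely_integrable_bounded_measurable_product_real[OF _ _ _ assms(2)])
  show "f \<in> borel_measurable (lebesgue_on {a..c})"
    using assms(1) by (rule continuous_imp_measurable_on_sets_lebesgue) simp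
  show "bounded (f ` {a..c})"
    using assms(1) by (intro compact_imp_bounded compact_continuous_image) auto
qed simp

lemma absolutely_integrable_powr_reflected_mult:
  fixes f :: "real \<Rightarrow> real"
  assumes "0 < \<beta>" "a \<le> c" "continuous_on {a..c} f"
  shows "(\<lambda>x. (c - x) powr (\<beta> - 1) * f x) absolutely_integrable_on {a..c}"
  using absolutely_integrable_continuous_mult[OF assms(3)
      nonnegative_absolutely_integrable_1[OF has_integral_integrable[OF has_integral_powr_reflected[OF assms(1,2)]]]]
  by (simp add: mult.commute)

lemma absolutely_integrable_powr_shifted_mult:
  fixes f :: "real \<Rightarrow> real"
  assumes "0 < \<beta>" "a \<le> c" "continuous_on {a..c} f"
  shows "(\<lambda>x. (x - a) powr (\<beta> - 1) * f x) absolutely_integrable_on {a..c}"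
  using absolutely_integrable_continuous_mult[OF assms(3)
      nonnegative_absolutely_integrable_1[OF has_integral_integrable[OF has_integral_powr_shifted[OF assms(1,2)]]]]
  by (simp add: mult.commute)

lemma set_integrable_lborel_imp_absolutely_integrable:
  fixes f :: "real \<Rightarrow> real"
  assumes "set_integrable lborel S f"
  shows "f absolutely_integrable_on S"
  using assms integrable_completion[OF borel_measurable_integrable[OF assms[unfolded set_integrable_def]]]
  unfolding set_integrable_def by simp

lemma set_lborel_integral_eq_integral:
  fixes f :: "real \<Rightarrow> real"
  assumes "set_borel_measurable borel S f" "f absolutely_integrable_on S"
  shows "(LINT x:S|lborel. f x) = integral S f"
proof -
  have "set_integrable lborel S f"
    using assms integrable_completion[of "\<lambda>x. indicator S x *\<^sub>R f x" lborel]
    unfolding set_integrable_def set_borel_measurable_def by simp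
  then show ?thesis by (rule set_borel_integral_eq_integral(2))
qed

lemma set_borel_measurable_mult_continuous:
  fixes k f :: "real \<Rightarrow> real"
  assumes "k \<in> borel_measurable borel" "continuous_on {a..c} f"
  shows "set_borel_measurable borel {a..c} (\<lambda>x. k x * f x)"
proof -
  have "(\<lambda>x. k x * (indicator {a..c} x *\<^sub>R f x)) \<in> borel_measurable borel"
    using assms borel_measurable_continuous_on_indicator[of "{a..c}" f] by measurable
  then show ?thesis
    unfolding set_borel_measurable_def by (simp add: indicator_scaleR_eq_if mult.left_commute)
qed

lemma RL_left_eq_integral:
  fixes f :: "real \<Rightarrow> real"
  assumes "0 < \<alpha>" "a \<le> c" "continuous_on {a..c} f"
  shows "RL_left \<alpha> a f c = integral {a..c} (\<lambda>x. (c - x) powr (\<alpha> - 1) * f x) / Gamma \<alpha>"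
proof -
  have "set_borel_measurable borel {a..c} (\<lambda>x. (c - x) powr (\<alpha> - 1) * f x)"
    using assms(3) by (intro set_borel_measurable_mult_continuous) auto
  then show ?thesis
    using assms
    by (simp add: RL_left_def set_lborel_integral_eq_integral absolutely_integrable_powr_reflected_mult)
qed

lemma RL_right_eq_integral:
  fixes f :: "real \<Rightarrow> real"
  assumes "0 < \<alpha>" "a \<le> c" "continuous_on {a..c} f"
  shows "RL_right \<alpha> c f a = integral {a..c} (\<lambda>x. (x - a) powr (\<alpha> - 1) * f x) / Gamma \<alpha>"
proof -
  have "set_borel_measurable borel {a..c} (\<lambda>x. (x - a) powr (\<alpha> - 1) * f x)"
    using assms(3) by (intro set_borel_measurable_mult_continuous) auto
  then show ?thesis
    using assms
    by (simp add: RL_right_def set_lborel_integral_eq_integral absolutely_integrable_powr_shifted_mult)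
qed

lemma Gamma_RL_sum_eq:
  fixes f f' :: "real \<Rightarrow> real"
  assumes \<alpha>: "0 < \<alpha>" and ac: "a < c" and f: "continuous_on {a..c} f"
    and f': "\<And>x. x \<in> {a<..<c} \<Longrightarrow> (f has_real_derivative f' x) (at x)"
    and f'_int: "f' absolutely_integrable_on {a..c}"
  shows "Gamma (\<alpha> + 1) * (RL_left \<alpha> a f c + RL_right \<alpha> c f a)
    = (c - a) powr \<alpha> * (f a + f c) + integral {a..c} (\<lambda>x. ((c - x) powr \<alpha> - (x - a) powr \<alpha>) * f' x)"
proof -
  define w where "w x = (c - x) powr \<alpha> - (x - a) powr \<alpha>" for x
  define W where "W x = - w x / \<alpha>" for x
  define W' where "W' x = (c - x) powr (\<alpha> - 1) + (x - a) powr (\<alpha> - 1)" for x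
  have W_cont: "continuous_on {a..c} W"
    unfolding W_def w_def using \<alpha> by (intro continuous_intros continuous_on_powr') auto
  have W_deriv: "(W has_vector_derivative W' x) (at x)" if "x \<in> {a<..<c}" for x
    using that \<alpha> unfolding W_def w_def W'_def has_real_derivative_iff_has_vector_derivative[symmetric]
    by (auto intro!: derivative_eq_intros simp: field_simps)
  have Wf'_int: "(\<lambda>x. W x * f' x) integrable_on {a..c}"
    using absolutely_integrable_continuous_mult[OF W_cont f'_int] set_lebesgue_integral_eq_integral(1) by blast
  have "((\<lambda>x. W' x * f x) has_integral W c * f c - W a * f a - integral {a..c} (\<lambda>x. W x * f' x)) {a..c}"
    by (rule integration_by_parts_interior[OF bounded_bilinear_mult, of a c W f])
      (use ac W_cont f W_deriv f' Wf'_int in \<open>auto simp: has_real_derivative_iff_has_vector_derivative\<close>)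
  moreover have "W c = (c - a) powr \<alpha> / \<alpha>" "W a = - ((c - a) powr \<alpha> / \<alpha>)"
    by (simp_all add: W_def w_def)
  moreover have "integral {a..c} (\<lambda>x. W x * f' x) = - integral {a..c} (\<lambda>x. w x * f' x) / \<alpha>"
  proof -
    have "(\<lambda>x. W x * f' x) = (\<lambda>x. w x * f' x / - \<alpha>)"
      by (auto simp: W_def)
    then show ?thesis by simp
  qed
  ultimately have "\<alpha> * integral {a..c} (\<lambda>x. W' x * f x)
      = (c - a) powr \<alpha> * (f a + f c) + integral {a..c} (\<lambda>x. w x * f' x)"
    using \<alpha> by (simp add: integral_unique field_simps)
  moreover have "integral {a..c} (\<lambda>x. W' x * f x) = Gamma \<alpha> * (RL_left \<alpha> a f c + RL_right \<alpha> c f a)"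
  proof -
    have "Gamma \<alpha> \<noteq> 0"
      using Gamma_real_pos[OF \<alpha>] by linarith
    then show ?thesis
      using ac absolutely_integrable_powr_reflected_mult[OF \<alpha> _ f] absolutely_integrable_powr_shifted_mult[OF \<alpha> _ f]
      by (simp add: W'_def RL_left_eq_integral[OF \<alpha> _ f] RL_right_eq_integral[OF \<alpha> _ f] distrib_right
          integral_add set_lebesgue_integral_eq_integral(1) field_simps)
  qed
  moreover have "Gamma (\<alpha> + 1) = \<alpha> * Gamma \<alpha>"
    by (rule Gamma_plus1) (use \<alpha> nonpos_Ints_nonpos in force)
  ultimately show ?thesis by (simp add: w_def)
qed

lemma abs_integral_powr_weight_le:
  fixes g :: "real \<Rightarrow> real" and a c p q \<alpha> A B :: real
  assumes \<alpha>: "0 < \<alpha>" "\<alpha> \<le> 1" and ac: "a < c" and pq: "q > 1" "1 / p + 1 / q = 1"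
    and g_int: "g absolutely_integrable_on {a..c}" and AB: "0 \<le> A" "0 \<le> B"
    and g_le: "\<And>x. x \<in> {a..c} \<Longrightarrow> \<bar>g x\<bar> powr q \<le> (1 - (x - a) / (c - a)) * A + (x - a) / (c - a) * B"
  shows "\<bar>integral {a..c} (\<lambda>x. ((c - x) powr \<alpha> - (x - a) powr \<alpha>) * g x)\<bar>
    \<le> (c - a) powr (\<alpha> + 1) / (\<alpha> * p + 1) powr (1 / p) * ((A + B) / 2) powr (1 / q)"
proof (cases "A + B = 0")
  case True
  have "A = 0" "B = 0" using True AB by linarith+
  then have "g x = 0" if "x \<in> {a..c}" for x
    using g_le[OF that] powr_ge_zero[of "\<bar>g x\<bar>" q] by simp
  then have "integral {a..c} (\<lambda>x. ((c - x) powr \<alpha> - (x - a) powr \<alpha>) * g x) = integral {a..c} (\<lambda>x. 0)"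
    by (intro integral_cong) simp
  then show ?thesis using ac by simp
next
  case False
  define e where "e = c - a"
  define w where "w x = (c - x) powr \<alpha> - (x - a) powr \<alpha>" for x
  define U where "U = e powr (\<alpha> * p + 1) / (\<alpha> * p + 1)"
  define V where "V = e * ((A + B) / 2)"
  have p: "p > 1" using conjugate_exponent_gt_one[OF pq] .
  have e: "e > 0" using ac by (simp add: e_def)
  have \<alpha>p: "0 < \<alpha> * p" using \<alpha>(1) p by simp
  have U: "U > 0" using e \<alpha>p by (simp add: U_def)
  have V: "V > 0" using e False AB by (simp add: V_def)
  have w_cont: "continuous_on {a..c} w"
    unfolding w_def using \<alpha> by (intro continuous_intros continuous_on_powr') auto
  have wg_int: "(\<lambda>x. w x * g x) absolutely_integrable_on {a..c}"
    by (rule absolutely_integrable_continuous_mult[OF w_cont g_int])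
  have abs_wg_int: "(\<lambda>x. \<bar>w x\<bar> * \<bar>g x\<bar>) integrable_on {a..c}"
    using wg_int unfolding absolutely_integrable_on_def by (simp add: abs_mult)
  have "integral {a..c} (\<lambda>x. \<bar>w x\<bar> * \<bar>g x\<bar>) \<le> U powr (1 / p) * V powr (1 / q)"
  proof (rule integral_mult_le_Holder_majorants[OF p pq U V])
    fix x assume x: "x \<in> {a..c}"
    have "\<bar>w x\<bar> \<le> \<bar>(c - x) - (x - a)\<bar> powr \<alpha>"
      unfolding w_def using x \<alpha> by (intro abs_powr_diff_le) auto
    also have "(c - x) - (x - a) = a + c - 2 * x" by simp
    finally have "\<bar>w x\<bar> powr p \<le> (\<bar>a + c - 2 * x\<bar> powr \<alpha>) powr p"
      using p by (intro powr_mono2) auto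
    then show "\<bar>w x\<bar> powr p \<le> \<bar>a + c - 2 * x\<bar> powr (\<alpha> * p)"
      by (simp add: powr_powr)
    show "\<bar>g x\<bar> powr q \<le> (1 - (x - a) / e) * A + (x - a) / e * B"
      using g_le[OF x] by (simp add: e_def)
  next
    have "((\<lambda>x. \<bar>a + c - 2 * x\<bar> powr (\<alpha> * p)) has_integral U) {a..c}"
      unfolding U_def e_def using \<alpha>p ac by (intro has_integral_abs_powr_midpoint) auto
    then show "(\<lambda>x. \<bar>a + c - 2 * x\<bar> powr (\<alpha> * p)) integrable_on {a..c}"
      "integral {a..c} (\<lambda>x. \<bar>a + c - 2 * x\<bar> powr (\<alpha> * p)) \<le> U"
      by (auto simp: integral_unique)
    have "((\<lambda>x. (1 - (x - a) / e) * A + (x - a) / e * B) has_integral V) {a..c}"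
      unfolding V_def e_def using ac by (rule has_integral_linear_interpolation)
    then show "(\<lambda>x. (1 - (x - a) / e) * A + (x - a) / e * B) integrable_on {a..c}"
      "integral {a..c} (\<lambda>x. (1 - (x - a) / e) * A + (x - a) / e * B) \<le> V"
      by (auto simp: integral_unique)
  qed (use abs_wg_int in auto)
  moreover have "\<bar>integral {a..c} (\<lambda>x. w x * g x)\<bar> \<le> integral {a..c} (\<lambda>x. \<bar>w x\<bar> * \<bar>g x\<bar>)"
    using integral_norm_bound_integral[OF set_lebesgue_integral_eq_integral(1)[OF wg_int] abs_wg_int]
    by (simp add: abs_mult)
  moreover have "U powr (1 / p) * V powr (1 / q)
      = e powr (\<alpha> + 1) / (\<alpha> * p + 1) powr (1 / p) * ((A + B) / 2) powr (1 / q)"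
  proof -
    have "(\<alpha> * p + 1) / p = \<alpha> + 1 / p" using p by (simp add: field_simps)
    then have "U powr (1 / p) = e powr (\<alpha> + 1 / p) / (\<alpha> * p + 1) powr (1 / p)"
      unfolding U_def using e \<alpha>p by (simp add: powr_divide powr_powr)
    moreover have "V powr (1 / q) = e powr (1 / q) * ((A + B) / 2) powr (1 / q)"
      unfolding V_def using e AB by (intro powr_mult)
    moreover have "e powr (\<alpha> + 1 / p) * e powr (1 / q) = e powr (\<alpha> + 1)"
      using pq(2) by (simp add: powr_add[symmetric] add.assoc)
    ultimately show ?thesis by (simp add: field_simps)
  qed
  ultimately show ?thesis by (simp add: w_def e_def)
qed

lemma fractional_trapezoid_inequality:
  fixes f f' :: "real \<Rightarrow> real" and a c p q \<alpha> A B :: real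
  assumes ac: "a < c" and \<alpha>: "0 \<le> \<alpha>" "\<alpha> \<le> 1" and pq: "q > 1" "1 / p + 1 / q = 1"
    and f: "continuous_on {a..c} f"
    and f': "\<And>x. x \<in> {a<..<c} \<Longrightarrow> (f has_real_derivative f' x) (at x)"
    and f'_int: "f' absolutely_integrable_on {a..c}" and AB: "0 \<le> A" "0 \<le> B"
    and f'_le: "\<And>x. x \<in> {a..c} \<Longrightarrow> \<bar>f' x\<bar> powr q \<le> (1 - (x - a) / (c - a)) * A + (x - a) / (c - a) * B"
  shows "\<bar>(f a + f c) / 2 - Gamma (\<alpha> + 1) / (2 * (c - a) powr \<alpha>) * (RL_left \<alpha> a f c + RL_right \<alpha> c f a)\<bar>
    \<le> (c - a) / (2 * (\<alpha> * p + 1) powr (1 / p)) * ((A + B) / 2) powr (1 / q)"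
proof (cases "\<alpha> = 0")
  case True
  then show ?thesis using ac by (simp add: RL_left_def RL_right_def add.commute)
next
  case False
  then have \<alpha>_pos: "0 < \<alpha>" using \<alpha> by simp
  define J where "J = integral {a..c} (\<lambda>x. ((c - x) powr \<alpha> - (x - a) powr \<alpha>) * f' x)"
  have e: "0 < (c - a) powr \<alpha>" using ac by simp
  have "(f a + f c) / 2 - Gamma (\<alpha> + 1) / (2 * (c - a) powr \<alpha>) * (RL_left \<alpha> a f c + RL_right \<alpha> c f a)
      = - J / (2 * (c - a) powr \<alpha>)"
    using Gamma_RL_sum_eq[OF \<alpha>_pos ac f f' f'_int] e by (simp add: J_def field_simps)
  then have "\<bar>(f a + f c) / 2 - Gamma (\<alpha> + 1) / (2 * (c - a) powr \<alpha>) * (RL_left \<alpha> a f c + RL_right \<alpha> c f a)\<bar>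
      = \<bar>J\<bar> / (2 * (c - a) powr \<alpha>)"
    using e by simp
  also have "\<dots> \<le> (c - a) powr (\<alpha> + 1) / (\<alpha> * p + 1) powr (1 / p) * ((A + B) / 2) powr (1 / q)
      / (2 * (c - a) powr \<alpha>)"
    unfolding J_def using e
    by (intro divide_right_mono abs_integral_powr_weight_le[OF \<alpha>_pos \<alpha>(2) ac pq f'_int AB f'_le]) auto
  also have "\<dots> = (c - a) / (2 * (\<alpha> * p + 1) powr (1 / p)) * ((A + B) / 2) powr (1 / q)"
    using ac e by (simp add: powr_add)
  finally show ?thesis .
qed

lemma invex_segment_subset:
  assumes "invex A \<eta>" "a \<in> A" "b \<in> A" "0 < \<eta> b a"
  shows "{a..a + \<eta> b a} \<subseteq> A"
proof
  fix x assume "x \<in> {a..a + \<eta> b a}"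
  then have "(x - a) / \<eta> b a \<in> {0..1}" using assms(4) by (auto simp: divide_le_eq)
  then have "a + (x - a) / \<eta> b a * \<eta> b a \<in> A"
    using assms(1-3) unfolding invex_def by blast
  then show "x \<in> A" using assms(4) by simp
qed

lemma preinvex_le_interpolation:
  assumes "preinvex A \<eta> g" "a \<in> A" "b \<in> A" "0 < \<eta> b a" "x \<in> {a..a + \<eta> b a}"
  shows "g x \<le> (1 - (x - a) / \<eta> b a) * g a + (x - a) / \<eta> b a * g b"
proof -
  have "(x - a) / \<eta> b a \<in> {0..1}" using assms(4,5) by (auto simp: divide_le_eq)
  then have "g (a + (x - a) / \<eta> b a * \<eta> b a) \<le> (1 - (x - a) / \<eta> b a) * g a + (x - a) / \<eta> b a * g b"
    using assms(1-3) unfolding preinvex_def by blast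
  then show ?thesis using assms(4) by simp
qed

theorem theorem2p4:
  fixes A :: "real set" and \<eta> :: "real \<Rightarrow> real \<Rightarrow> real"
    and f f' :: "real \<Rightarrow> real" and a b p q \<alpha> :: real
  assumes "open A" and "invex A \<eta>"
    and "a \<in> A" and "b \<in> A" and "a < a + \<eta> b a"
    and "\<And>x. x \<in> A \<Longrightarrow> (f has_real_derivative f' x) (at x)"
    and "set_integrable lborel {a..a + \<eta> b a} f'"
    and "q > 1" and "1 / p + 1 / q = 1"
    and "preinvex A \<eta> (\<lambda>x. \<bar>f' x\<bar> powr q)"
    and "0 \<le> \<alpha>" and "\<alpha> \<le> 1"
  shows "\<bar>(f a + f (a + \<eta> b a)) / 2
           - Gamma (\<alpha> + 1) / (2 * (\<eta> b a) powr \<alpha>)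
             * (RL_left \<alpha> a f (a + \<eta> b a) + RL_right \<alpha> (a + \<eta> b a) f a)\<bar>
         \<le> \<eta> b a / (2 * (\<alpha> * p + 1) powr (1 / p))
             * ((\<bar>f' a\<bar> powr q + \<bar>f' b\<bar> powr q) / 2) powr (1 / q)"
proof -
  have \<eta>: "0 < \<eta> b a" using assms(5) by simp
  have "{a..a + \<eta> b a} \<subseteq> A"
    using invex_segment_subset[OF assms(2-4) \<eta>] .
  then have deriv: "(f has_real_derivative f' x) (at x)" if "x \<in> {a..a + \<eta> b a}" for x
    using assms(6) that by blast
  then have "continuous_on {a..a + \<eta> b a} f"
    by (meson DERIV_isCont continuous_at_imp_continuous_on)
  then have "\<bar>(f a + f (a + \<eta> b a)) / 2 - Gamma (\<alpha> + 1) / (2 * (a + \<eta> b a - a) powr \<alpha>)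
        * (RL_left \<alpha> a f (a + \<eta> b a) + RL_right \<alpha> (a + \<eta> b a) f a)\<bar>
      \<le> (a + \<eta> b a - a) / (2 * (\<alpha> * p + 1) powr (1 / p))
        * ((\<bar>f' a\<bar> powr q + \<bar>f' b\<bar> powr q) / 2) powr (1 / q)"
  proof (rule fractional_trapezoid_inequality[OF assms(5,11,12,8,9)])
    show "(f has_real_derivative f' x) (at x)" if "x \<in> {a<..<a + \<eta> b a}" for x
      using deriv that by simp
    show "f' absolutely_integrable_on {a..a + \<eta> b a}"
      by (rule set_integrable_lborel_imp_absolutely_integrable[OF assms(7)])
    show "\<bar>f' x\<bar> powr q \<le> (1 - (x - a) / (a + \<eta> b a - a)) * \<bar>f' a\<bar> powr q
        + (x - a) / (a + \<eta> b a - a) * \<bar>f' b\<bar> powr q" if "x \<in> {a..a + \<eta> b a}" for x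
      using preinvex_le_interpolation[OF assms(10,3,4) \<eta> that] by simp
  qed auto
  then show ?thesis by simp
qed

end
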